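(* Let $A$ and $B$ be nontrivial commutative groups. (a) If $A$ is a torsion group and $B$ is torsion-free, then $\mathcal D(A,B)=\{-\infty,0,\infty\}$. (b) If $A$ is a torsion group and $B$ is torsion-split with $B[\mathrm{tors}]\ne\{0\}$ and $B/B[\mathrm{tors}]\ne\{0\}$, then $\mathcal D(A,B)=\mathcal D(A,B[\mathrm{tors}])\cup\{\infty\}$. (c) If there is a surjective homomorphism $A\to\mathbb{Z}$, then $\mathcal D(A,B)=\widetilde{\mathbb N}$.
   Context: For commutative groups $A,B$, $B^A$ denotes the commutative group (under pointwise addition) of all maps $A\to B$. For $a\in A$, the difference operator $\Delta_a:B^A\to B^A$ is $(\Delta_a f)(x)=f(x+a)-f(x)$. Let $\widetilde{\mathbb N}=\mathbb N\cup\{-\infty,\infty\}$ ($\mathbb N=\{0,1,2,\dots\}$), totally ordered with $-\infty$ least and $\infty$ greatest. The functional degree $\operatorname{fdeg}(f)\in\widetilde{\mathbb N}$ of $f\in B^A$ is: $-\infty$ if $f=0$; otherwise the least $n\in\mathbb N$ such that $\Delta_{a_1}\cdots\Delta_{a_{n+1}}f=0$ for all $a_1,\dots,a_{n+1}\in A$; and $\infty$ if no such $n$ exists. $\mathcal D(A,B)=\{\operatorname{fdeg}(f):f\in B^A\}\subseteq\widetilde{\mathbb N}$. $B[\mathrm{tors}]$ is the torsion subgroup of $B$; $B$ is torsion-split if $B[\mathrm{tors}]$ is a direct summand of $B$. *)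

theory Defs
  imports Main
begin

datatype xnat = NegInf | Fin nat | PosInf

definition diff_op :: "'a::ab_group_add \<Rightarrow> ('a \<Rightarrow> 'b::ab_group_add) \<Rightarrow> ('a \<Rightarrow> 'b)" where
  "diff_op a f = (\<lambda>x. f (x + a) - f x)"

definition kills :: "nat \<Rightarrow> ('a::ab_group_add \<Rightarrow> 'b::ab_group_add) \<Rightarrow> bool" where
  "kills n f \<longleftrightarrow> (\<forall>as. length as = Suc n \<longrightarrow> foldr diff_op as f = (\<lambda>_. 0))"

definition fdeg :: "('a::ab_group_add \<Rightarrow> 'b::ab_group_add) \<Rightarrow> xnat" where
  "fdeg f = (if f = (\<lambda>_. 0) then NegInf
             else if (\<exists>n. kills n f) then Fin (LEAST n. kills n f) else PosInf)"

text \<open>Degrees of maps \<open>A \<rightarrow> B\<close> with values in a subgroup \<open>S\<close> of \<open>B\<close>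
  (for \<open>S = UNIV\<close> this is \<open>\<D>(A,B)\<close>; for \<open>S\<close> a subgroup it is \<open>\<D>(A,S)\<close>,
  since the difference operators on maps into \<open>S\<close> agree with those computed in \<open>B\<close>).\<close>
definition DD :: "'a::ab_group_add itself \<Rightarrow> 'b::ab_group_add set \<Rightarrow> xnat set" where
  "DD _ S = fdeg ` {f :: 'a::ab_group_add \<Rightarrow> 'b::ab_group_add. range f \<subseteq> S}"

definition nsmul :: "nat \<Rightarrow> 'b::ab_group_add \<Rightarrow> 'b" where
  "nsmul n b = (((+) b) ^^ n) 0"

definition tors :: "'b::ab_group_add set" where
  "tors = {b. \<exists>n>0. nsmul n b = 0}"

definition torsion_group :: "'b::ab_group_add itself \<Rightarrow> bool" where
  "torsion_group _ \<longleftrightarrow> (tors :: 'b set) = UNIV"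

definition torsion_free :: "'b::ab_group_add itself \<Rightarrow> bool" where
  "torsion_free _ \<longleftrightarrow> (tors :: 'b set) = {0}"

definition is_subgroup :: "'b::ab_group_add set \<Rightarrow> bool" where
  "is_subgroup C \<longleftrightarrow> 0 \<in> C \<and> (\<forall>x\<in>C. \<forall>y\<in>C. x - y \<in> C)"

definition torsion_split :: "'b::ab_group_add itself \<Rightarrow> bool" where
  "torsion_split _ \<longleftrightarrow> (\<exists>C :: 'b set. is_subgroup C \<and> tors \<inter> C = {0} \<and>
       (\<forall>b. \<exists>t\<in>tors. \<exists>c\<in>C. b = t + c))"

end

theory Submission
  imports Defs
begin

text \<open>
  If \<open>\<Delta>\<^bsub>a\<^sub>1\<^esub>\<dots>\<Delta>\<^bsub>a\<^sub>n\<^sub>+\<^sub>1\<^esub>f = 0\<close>, then by induction every \<open>\<Delta>\<^sub>af\<close> is a constant \<open>c\<close>, so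
  \<open>f(x + m a) = f x + m c\<close>; on a torsion group \<open>m a = 0\<close> for some \<open>m > 0\<close>, hence \<open>c\<close> is torsion.
  So a map of finite degree from a torsion group into a torsion-free group (or into a
  torsion-free direct complement \<open>C\<close> of \<open>B[tors]\<close>) is constant, whereas the delta function at
  \<open>0\<close> has infinite degree. For a torsion-split \<open>B\<close>, a map of finite degree differs from its
  \<open>B[tors]\<close>-component by its \<open>C\<close>-component, which is constant, so its degree is realised by a
  torsion-valued map. Finally, through a surjection \<open>A \<rightarrow> \<int>\<close> degrees can be computed on \<open>\<int>\<close>,
  where the \<open>n\<close>-fold discrete antiderivative of a nonzero constant has degree \<open>n\<close> and the delta
  function has infinite degree.
\<close>

lemma diff_op_commute: "diff_op a (diff_op c f) = diff_op c (diff_op a f)"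
  by (rule ext) (simp add: diff_op_def algebra_simps)

lemma funpow_diff_op_commute: "diff_op a ((diff_op c ^^ n) f) = (diff_op c ^^ n) (diff_op a f)"
  by (induction n) (simp_all add: diff_op_commute[of a c])

lemma foldr_diff_op_diff:
  "foldr diff_op as (\<lambda>x. f x - g x) = (\<lambda>x. foldr diff_op as f x - foldr diff_op as g x)"
  by (induction as) (auto simp: diff_op_def algebra_simps)

lemma foldr_diff_op_hom:
  assumes "\<And>x y. p (x - y) = p x - p y"
  shows "foldr diff_op as (\<lambda>x. p (f x)) = (\<lambda>x. p (foldr diff_op as f x))"
  by (induction as) (auto simp: diff_op_def assms)

lemma foldr_diff_op_comp:
  fixes h :: "'a::ab_group_add \<Rightarrow> 'c::ab_group_add"
  assumes "\<And>x y. h (x + y) = h x + h y"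
  shows "foldr diff_op as (\<lambda>x. \<phi> (h x)) = (\<lambda>x. foldr diff_op (map h as) \<phi> (h x))"
  by (induction as) (auto simp: diff_op_def assms)

lemma foldr_diff_op_range_subgroup:
  assumes "is_subgroup C" and "range f \<subseteq> C"
  shows "range (foldr diff_op as f) \<subseteq> C"
proof (induction as)
  case Nil
  then show ?case using assms(2) by simp
next
  case (Cons a as)
  then have "foldr diff_op as f (x + a) \<in> C" "foldr diff_op as f x \<in> C" for x
    by auto
  then show ?case using assms(1) by (auto simp: diff_op_def[of a] is_subgroup_def)
qed

lemma kills_0_iff: "kills 0 f \<longleftrightarrow> (\<forall>a. diff_op a f = (\<lambda>_. 0))"
  unfolding kills_def
proof (intro iffI allI impI)
  fix a
  assume "\<forall>as. length as = Suc 0 \<longrightarrow> foldr diff_op as f = (\<lambda>_. 0)"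
  from this[rule_format, of "[a]"] show "diff_op a f = (\<lambda>_. 0)" by simp
next
  fix as :: "'a list"
  assume "\<forall>a. diff_op a f = (\<lambda>_. 0)" and "length as = Suc 0"
  then show "foldr diff_op as f = (\<lambda>_. 0)" by (auto simp: length_Suc_conv)
qed

lemma kills_0_const:
  assumes "kills 0 f"
  shows "f x = f y"
proof -
  have "diff_op (x - y) f y = 0" using assms by (simp add: kills_0_iff)
  then show ?thesis by (simp add: diff_op_def)
qed

lemma kills_Suc_iff: "kills (Suc n) f \<longleftrightarrow> (\<forall>a. kills n (diff_op a f))"
  unfolding kills_def
proof (intro iffI allI impI)
  fix a and bs :: "'a list"
  assume "\<forall>as. length as = Suc (Suc n) \<longrightarrow> foldr diff_op as f = (\<lambda>_. 0)" and "length bs = Suc n"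
  from this(1)[rule_format, of "bs @ [a]"] this(2)
  show "foldr diff_op bs (diff_op a f) = (\<lambda>_. 0)" by simp
next
  fix as :: "'a list"
  assume killed: "\<forall>a bs. length bs = Suc n \<longrightarrow> foldr diff_op bs (diff_op a f) = (\<lambda>_. 0)"
    and "length as = Suc (Suc n)"
  then obtain bs a where "as = bs @ [a]" "length bs = Suc n"
    by (cases as rule: rev_exhaust) auto
  then show "foldr diff_op as f = (\<lambda>_. 0)" using killed by simp
qed

lemma kills_Suc: "kills n f \<Longrightarrow> kills (Suc n) f"
  unfolding kills_def
proof (intro allI impI)
  fix as :: "'a list"
  assume killed: "\<forall>as. length as = Suc n \<longrightarrow> foldr diff_op as f = (\<lambda>_. 0)"
    and "length as = Suc (Suc n)"
  then obtain a bs where "as = a # bs" "length bs = Suc n" by (cases as) auto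
  then show "foldr diff_op as f = (\<lambda>_. 0)" using killed by (simp add: diff_op_def)
qed

lemma kills_mono: "m \<le> n \<Longrightarrow> kills m f \<Longrightarrow> kills n f"
  by (induction n rule: dec_induct) (auto intro: kills_Suc)

lemma kills_diff_iff:
  assumes "kills m g"
  shows "kills m (\<lambda>x. f x - g x) \<longleftrightarrow> kills m f"
  using assms unfolding kills_def by (simp add: foldr_diff_op_diff)

lemma kills_hom:
  fixes f :: "'a::ab_group_add \<Rightarrow> 'b::ab_group_add" and p :: "'b \<Rightarrow> 'c::ab_group_add"
  assumes hom: "\<And>x y. p (x - y) = p x - p y" and "kills n f"
  shows "kills n (\<lambda>x. p (f x))"
  unfolding kills_def
proof (intro allI impI)
  fix as :: "'a list" assume "length as = Suc n"
  then have "foldr diff_op as f = (\<lambda>_. 0)" using \<open>kills n f\<close> by (simp add: kills_def)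
  moreover have "p 0 = 0" using hom[of 0 0] by simp
  ultimately show "foldr diff_op as (\<lambda>x. p (f x)) = (\<lambda>_. 0)"
    by (simp add: foldr_diff_op_hom[of p, OF hom])
qed

lemma kills_comp_iff:
  fixes h :: "'a::ab_group_add \<Rightarrow> 'c::ab_group_add"
  assumes hom: "\<And>x y. h (x + y) = h x + h y" and "surj h"
  shows "kills n (\<lambda>x. \<phi> (h x)) \<longleftrightarrow> kills n \<phi>"
proof -
  have vanish_comp_iff: "(\<lambda>x. g (h x)) = (\<lambda>_. 0) \<longleftrightarrow> g = (\<lambda>_. 0)" for g :: "'c \<Rightarrow> 'b"
    using \<open>surj h\<close> by (metis surj_def)
  have vanish_iff: "foldr diff_op as (\<lambda>x. \<phi> (h x)) = (\<lambda>_. 0)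
      \<longleftrightarrow> foldr diff_op (map h as) \<phi> = (\<lambda>_. 0)" for as
    unfolding foldr_diff_op_comp[of h, OF hom, of as \<phi>] by (rule vanish_comp_iff)
  have lift: "\<exists>as. length as = Suc n \<and> map h as = cs" if "length cs = Suc n" for cs
    using that surj_f_inv_f[OF \<open>surj h\<close>] by (intro exI[of _ "map (inv h) cs"]) (simp add: map_idI)
  show ?thesis
    unfolding kills_def vanish_iff
  proof (intro iffI allI impI)
    fix cs :: "'c list"
    assume "\<forall>as. length as = Suc n \<longrightarrow> foldr diff_op (map h as) \<phi> = (\<lambda>_. 0)"
      and "length cs = Suc n"
    then show "foldr diff_op cs \<phi> = (\<lambda>_. 0)" using lift by blast
  qed simp
qed

lemma kills_const: "kills n (\<lambda>_. c)"
  by (rule kills_mono[of 0]) (auto simp: kills_0_iff diff_op_def)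

lemma fdeg_eq_NegInf_iff: "fdeg f = NegInf \<longleftrightarrow> f = (\<lambda>_. 0)"
  unfolding fdeg_def by auto

lemma fdeg_zero [simp]: "fdeg (\<lambda>_. 0) = NegInf"
  by (simp add: fdeg_eq_NegInf_iff)

lemma fdeg_eq_FinD: "fdeg f = Fin n \<Longrightarrow> kills n f"
  unfolding fdeg_def by (auto split: if_splits intro: LeastI)

lemma fdeg_eq_FinI:
  assumes "f \<noteq> (\<lambda>_. 0)" and "kills n f" and "\<And>m. kills m f \<Longrightarrow> n \<le> m"
  shows "fdeg f = Fin n"
proof -
  have "(LEAST m. kills m f) = n"
    using assms(2,3) by (rule Least_equality)
  then show ?thesis using assms(1,2) unfolding fdeg_def by auto
qed

lemma fdeg_eq_PosInfI: "f \<noteq> (\<lambda>_. 0) \<Longrightarrow> (\<And>n. \<not> kills n f) \<Longrightarrow> fdeg f = PosInf"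
  unfolding fdeg_def by auto

lemma fdeg_eq_Fin_0: "f \<noteq> (\<lambda>_. 0) \<Longrightarrow> kills 0 f \<Longrightarrow> fdeg f = Fin 0"
  by (rule fdeg_eq_FinI) auto

lemma fdeg_const: "c \<noteq> 0 \<Longrightarrow> fdeg (\<lambda>_. c) = Fin 0"
  by (rule fdeg_eq_Fin_0) (metis, rule kills_const)

lemma fdeg_comp:
  fixes h :: "'a::ab_group_add \<Rightarrow> 'c::ab_group_add"
  assumes "\<And>x y. h (x + y) = h x + h y" and "surj h"
  shows "fdeg (\<lambda>x. \<phi> (h x)) = fdeg \<phi>"
proof -
  have "(\<lambda>x. \<phi> (h x)) = (\<lambda>_. 0) \<longleftrightarrow> \<phi> = (\<lambda>_. 0)"
    using \<open>surj h\<close> by (metis surj_def)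
  then show ?thesis
    unfolding fdeg_def kills_comp_iff[of h, OF assms, of _ \<phi>] by simp
qed

lemma fdeg_diff_kills_0:
  assumes "kills 0 g" and "f \<noteq> (\<lambda>_. 0)" and "(\<lambda>x. f x - g x) \<noteq> (\<lambda>_. 0)"
  shows "fdeg (\<lambda>x. f x - g x) = fdeg f"
proof -
  have "kills m (\<lambda>x. f x - g x) \<longleftrightarrow> kills m f" for m
    using kills_diff_iff[of m g f] kills_mono[of 0 m g] \<open>kills 0 g\<close> by simp
  then show ?thesis
    unfolding fdeg_def if_not_P[OF assms(2)] if_not_P[OF assms(3)] by (simp only:)
qed

lemma DD_memI:
  fixes A :: "'a::ab_group_add itself" and f :: "'a \<Rightarrow> 'b::ab_group_add"
  shows "range f \<subseteq> S \<Longrightarrow> fdeg f \<in> DD A S"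
  unfolding DD_def by blast

lemma NegInf_in_DD: "0 \<in> S \<Longrightarrow> NegInf \<in> DD A S"
  using DD_memI[of "\<lambda>_. 0" S A] by auto

lemma Fin_0_in_DD: "c \<in> S \<Longrightarrow> c \<noteq> 0 \<Longrightarrow> Fin 0 \<in> DD A S"
  using DD_memI[of "\<lambda>_. c" S A] by (auto simp: fdeg_const)

lemma DD_mono: "S \<subseteq> T \<Longrightarrow> DD A S \<subseteq> DD A T"
  unfolding DD_def by blast

lemma nsmul_0 [simp]: "nsmul 0 b = 0"
  by (simp add: nsmul_def)

lemma nsmul_Suc [simp]: "nsmul (Suc n) b = b + nsmul n b"
  by (simp add: nsmul_def)

lemma nsmul_zero [simp]: "nsmul n (0::'b::ab_group_add) = 0"
  by (induction n) auto

lemma nsmul_add: "nsmul (m + n) b = nsmul m b + nsmul n b"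
  by (induction m) (auto simp: add.assoc)

lemma nsmul_mult: "nsmul (m * n) b = nsmul m (nsmul n b)"
  by (induction m) (auto simp: nsmul_add)

lemma nsmul_diff: "nsmul n (x - y) = nsmul n x - nsmul n (y::'b::ab_group_add)"
  by (induction n) (auto simp: algebra_simps)

lemma nsmul_shift:
  assumes "\<And>x. f (x + a) = f x + c"
  shows "f (x + nsmul m a) = f x + nsmul m c"
proof (induction m)
  case (Suc m)
  have "f (x + nsmul (Suc m) a) = f ((x + nsmul m a) + a)"
    by (simp add: algebra_simps)
  also have "\<dots> = f (x + nsmul m a) + c"
    by (rule assms)
  also have "\<dots> = f x + nsmul (Suc m) c"
    using Suc by (simp add: algebra_simps)
  finally show ?case .
qed simp

lemma zero_in_tors: "0 \<in> tors"
  unfolding tors_def by (auto intro: exI[of _ 1])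

lemma tors_diff:
  assumes "x \<in> tors" and "y \<in> tors"
  shows "x - y \<in> tors"
proof -
  obtain m n where "m > 0" "nsmul m x = 0" "n > 0" "nsmul n y = 0"
    using assms by (auto simp: tors_def)
  then have "nsmul (m * n) (x - y) = 0"
    by (metis nsmul_diff nsmul_mult nsmul_zero mult.commute diff_self)
  then show ?thesis using \<open>m > 0\<close> \<open>n > 0\<close> unfolding tors_def by (auto intro!: exI[of _ "m * n"])
qed

lemma kills_0_if_torsion_domain:
  fixes f :: "'a::ab_group_add \<Rightarrow> 'b::ab_group_add"
  assumes "(tors :: 'a set) = UNIV" and C: "is_subgroup C" and "tors \<inter> C = {0}"
    and "range f \<subseteq> C" and "kills n f"
  shows "kills 0 f"
  using assms(4,5)
proof (induction n arbitrary: f)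
  case (Suc n)
  show ?case unfolding kills_0_iff
  proof
    fix a
    let ?g = "diff_op a f"
    have "range ?g \<subseteq> C"
      using foldr_diff_op_range_subgroup[OF C Suc.prems(1), of "[a]"] by simp
    moreover have "kills 0 ?g"
      using Suc.IH[OF \<open>range ?g \<subseteq> C\<close>] Suc.prems(2) by (simp add: kills_Suc_iff)
    then have shift: "f (x + a) = f x + ?g 0" for x
      using kills_0_const[of ?g x 0] by (simp add: diff_op_def algebra_simps)
    obtain m where "m > 0" "nsmul m a = 0"
      using \<open>(tors :: 'a set) = UNIV\<close> unfolding tors_def by blast
    then have "nsmul m (?g 0) = 0"
      using nsmul_shift[of f a "?g 0" 0 m, OF shift] by simp
    then have "?g 0 \<in> tors" using \<open>m > 0\<close> unfolding tors_def by blast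
    ultimately have "?g 0 = 0" using \<open>tors \<inter> C = {0}\<close> by blast
    then show "?g = (\<lambda>_. 0)" using kills_0_const[OF \<open>kills 0 ?g\<close>] by (metis)
  qed
qed

lemma fdeg_torsion_domain:
  fixes f :: "'a::ab_group_add \<Rightarrow> 'b::ab_group_add"
  assumes "(tors :: 'a set) = UNIV" and "is_subgroup C" and "tors \<inter> C = {0}" and "range f \<subseteq> C"
  shows "fdeg f \<in> {NegInf, Fin 0, PosInf}"
  using kills_0_if_torsion_domain[OF assms] unfolding fdeg_def by auto

lemma fdeg_delta_torsion_domain:
  fixes c :: "'b::ab_group_add"
  assumes "(tors :: 'a::ab_group_add set) = UNIV" and "is_subgroup C" and "tors \<inter> C = {0}"
    and "c \<in> C" and "c \<noteq> 0" and "(a::'a) \<noteq> 0"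
  shows "fdeg (\<lambda>x::'a. if x = 0 then c else 0) = PosInf"
proof (rule fdeg_eq_PosInfI)
  let ?\<delta> = "\<lambda>x::'a. if x = 0 then c else 0"
  show "?\<delta> \<noteq> (\<lambda>_. 0)" using \<open>c \<noteq> 0\<close> by (metis)
  have "range ?\<delta> \<subseteq> C" using assms(2,4) by (auto simp: is_subgroup_def)
  show "\<not> kills n ?\<delta>" for n
  proof
    assume "kills n ?\<delta>"
    then have "kills 0 ?\<delta>" by (rule kills_0_if_torsion_domain[OF assms(1-3) \<open>range ?\<delta> \<subseteq> C\<close>])
    then have "?\<delta> a = ?\<delta> 0" by (rule kills_0_const)
    then show False using assms(5,6) by simp
  qed
qed

lemma DD_torsion_torsion_free:
  fixes A :: "'a::ab_group_add itself" and B :: "'b::ab_group_add itself"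
  assumes "a \<noteq> (0::'a)" and "b \<noteq> (0::'b)" and "torsion_group A" and "torsion_free B"
  shows "DD A (UNIV :: 'b set) = {NegInf, Fin 0, PosInf}"
proof -
  have tA: "(tors :: 'a set) = UNIV" and tB: "(tors :: 'b set) \<inter> UNIV = {0}"
    using assms(3,4) by (simp_all add: torsion_group_def torsion_free_def)
  have C: "is_subgroup (UNIV :: 'b set)" by (simp add: is_subgroup_def)
  have "DD A (UNIV :: 'b set) \<subseteq> {NegInf, Fin 0, PosInf}"
    unfolding DD_def using fdeg_torsion_domain[OF tA C tB] by blast
  moreover have "PosInf \<in> DD A (UNIV :: 'b set)"
    using DD_memI[of "\<lambda>x::'a. if x = 0 then b else 0" UNIV A]
      fdeg_delta_torsion_domain[OF tA C tB _ \<open>b \<noteq> 0\<close> \<open>a \<noteq> 0\<close>] by simp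
  ultimately show ?thesis
    using NegInf_in_DD[of UNIV A] Fin_0_in_DD[of b UNIV A] \<open>b \<noteq> 0\<close> by blast
qed

lemma torsion_split_projection:
  fixes B :: "'b::ab_group_add itself"
  assumes "torsion_split B"
  obtains C :: "'b set" and p where "is_subgroup C" and "tors \<inter> C = {0}"
    and "\<And>b. p b \<in> C" and "\<And>b. b - p b \<in> tors" and "\<And>x y. p (x - y) = p x - p y"
proof -
  obtain C :: "'b set" where C: "is_subgroup C" and TC: "tors \<inter> C = {0}"
    and decomp: "\<forall>b. \<exists>t\<in>tors. \<exists>c\<in>C. b = t + c"
    using assms unfolding torsion_split_def by blast
  define p where "p b = (SOME c. c \<in> C \<and> b - c \<in> tors)" for b
  have p: "p b \<in> C \<and> b - p b \<in> tors" for b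
  proof -
    obtain t c where "t \<in> tors" "c \<in> C" "b = t + c" using decomp by blast
    then have "\<exists>c. c \<in> C \<and> b - c \<in> tors" by (intro exI[of _ c]) simp
    then show ?thesis unfolding p_def by (rule someI_ex)
  qed
  have p_unique: "p b = c" if "c \<in> C" and "b - c \<in> tors" for b c
  proof -
    have "p b - c \<in> C" using C p[of b] that(1) unfolding is_subgroup_def by auto
    moreover have "(b - c) - (b - p b) \<in> tors" using tors_diff that(2) p[of b] by blast
    then have "p b - c \<in> tors" by simp
    ultimately have "p b - c = 0" using TC by blast
    then show ?thesis by simp
  qed
  have "p (x - y) = p x - p y" for x y
  proof (rule p_unique)
    show "p x - p y \<in> C" using C p unfolding is_subgroup_def by auto
    have "(x - p x) - (y - p y) \<in> tors" using tors_diff p by blast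
    then show "(x - y) - (p x - p y) \<in> tors" by (simp add: algebra_simps)
  qed
  with that[OF C TC] p show thesis by blast
qed

lemma fdeg_torsion_split:
  fixes f :: "'a::ab_group_add \<Rightarrow> 'b::ab_group_add" and A :: "'a itself" and B :: "'b itself"
  assumes tA: "(tors :: 'a set) = UNIV" and "torsion_split B" and "(t::'b) \<in> tors" and "t \<noteq> 0"
  shows "fdeg f \<in> DD A (tors :: 'b set) \<union> {PosInf}"
proof -
  obtain C :: "'b set" and p where C: "is_subgroup C" and TC: "tors \<inter> C = {0}"
    and pC: "\<And>b. p b \<in> C" and p_tors: "\<And>b. b - p b \<in> tors" and hom: "\<And>x y. p (x - y) = p x - p y"
    using torsion_split_projection[OF \<open>torsion_split B\<close>] by blast
  let ?fT = "\<lambda>x. f x - p (f x)"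
  have "fdeg f \<in> DD A (tors :: 'b set)" if "fdeg f = Fin n" for n
  proof -
    have "f \<noteq> (\<lambda>_. 0)" using that fdeg_eq_NegInf_iff by fastforce
    have "range (\<lambda>x. p (f x)) \<subseteq> C" using pC by auto
    moreover have "kills n (\<lambda>x. p (f x))" using kills_hom[of p, OF hom fdeg_eq_FinD[OF that]] .
    ultimately have killed: "kills 0 (\<lambda>x. p (f x))"
      by (rule kills_0_if_torsion_domain[OF tA C TC])
    show ?thesis
    proof (cases "?fT = (\<lambda>_. 0)")
      case True
      have "(\<lambda>x. p (f x)) = f"
      proof
        show "p (f x) = f x" for x using fun_cong[OF True, of x] by simp
      qed
      then have "fdeg f = Fin 0" using fdeg_eq_Fin_0[OF \<open>f \<noteq> (\<lambda>_. 0)\<close>] killed by simp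
      then show ?thesis using Fin_0_in_DD[of t "tors :: 'b set" A] \<open>t \<in> tors\<close> \<open>t \<noteq> 0\<close> by simp
    next
      case False
      then have "fdeg f = fdeg ?fT" using fdeg_diff_kills_0[OF killed \<open>f \<noteq> (\<lambda>_. 0)\<close>] by simp
      then show ?thesis using DD_memI[of ?fT "tors :: 'b set" A] p_tors by auto
    qed
  qed
  moreover have "fdeg f = NegInf \<Longrightarrow> fdeg f \<in> DD A (tors :: 'b set)"
    using NegInf_in_DD[of "tors :: 'b set" A] zero_in_tors by simp
  ultimately show ?thesis by (cases "fdeg f") simp_all
qed

lemma DD_torsion_split:
  fixes A :: "'a::ab_group_add itself" and B :: "'b::ab_group_add itself"
  assumes "a \<noteq> (0::'a)" and "torsion_group A" and "torsion_split B"
    and "(tors :: 'b set) \<noteq> {0}" and "(tors :: 'b set) \<noteq> UNIV"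
  shows "DD A (UNIV :: 'b set) = DD A (tors :: 'b set) \<union> {PosInf}"
proof -
  have tA: "(tors :: 'a set) = UNIV" using assms(2) by (simp add: torsion_group_def)
  obtain t :: 'b where "t \<in> tors" "t \<noteq> 0" using assms(4) zero_in_tors by auto
  obtain C :: "'b set" and p where C: "is_subgroup C" and TC: "tors \<inter> C = {0}"
    and pC: "\<And>b. p b \<in> C" and p_tors: "\<And>b. b - p b \<in> tors"
    by (rule torsion_split_projection[OF \<open>torsion_split B\<close>]) blast
  obtain b :: 'b where "b \<notin> tors" using assms(5) by auto
  then have "p b \<noteq> 0" using p_tors[of b] by auto
  then have "fdeg (\<lambda>x::'a. if x = 0 then p b else 0) = PosInf"
    by (rule fdeg_delta_torsion_domain[OF tA C TC pC _ \<open>a \<noteq> 0\<close>])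
  then have "PosInf \<in> DD A (UNIV :: 'b set)"
    using DD_memI[of "\<lambda>x::'a. if x = 0 then p b else 0" UNIV A] by simp
  moreover have "DD A (UNIV :: 'b set) \<subseteq> DD A (tors :: 'b set) \<union> {PosInf}"
  proof
    fix d assume "d \<in> DD A (UNIV :: 'b set)"
    then obtain f :: "'a \<Rightarrow> 'b" where "d = fdeg f" unfolding DD_def by blast
    then show "d \<in> DD A (tors :: 'b set) \<union> {PosInf}"
      using fdeg_torsion_split[OF tA assms(3) \<open>t \<in> tors\<close> \<open>t \<noteq> 0\<close>, of f A] by simp
  qed
  moreover have "DD A (tors :: 'b set) \<subseteq> DD A (UNIV :: 'b set)" by (rule DD_mono) simp
  ultimately show ?thesis by blast
qed

lemma kills_0_int_iff: "kills 0 (\<phi> :: int \<Rightarrow> 'b::ab_group_add) \<longleftrightarrow> diff_op 1 \<phi> = (\<lambda>_. 0)"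
proof
  assume "diff_op 1 \<phi> = (\<lambda>_. 0)"
  from fun_cong[OF this] have step: "\<phi> (k + 1) = \<phi> k" for k
    by (simp add: diff_op_def)
  have "\<phi> k = \<phi> 0" for k
  proof (induction k rule: int_induct[where k = 0])
    case (step2 i)
    then show ?case using step[of "i - 1"] by simp
  qed (simp_all add: step)
  then show "kills 0 \<phi>" unfolding kills_0_iff diff_op_def by (metis diff_self)
qed (simp add: kills_0_iff)

lemma kills_int_iff:
  "kills n (\<phi> :: int \<Rightarrow> 'b::ab_group_add) \<longleftrightarrow> (diff_op 1 ^^ Suc n) \<phi> = (\<lambda>_. 0)"
proof (induction n arbitrary: \<phi>)
  case 0
  then show ?case by (simp add: kills_0_int_iff)
next
  case (Suc n)
  let ?g = "(diff_op 1 ^^ Suc n) \<phi>"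
  have "(\<forall>a. kills n (diff_op a \<phi>)) \<longleftrightarrow> (\<forall>a. diff_op a ?g = (\<lambda>_. 0))"
    by (simp only: Suc.IH funpow_diff_op_commute)
  also have "\<dots> \<longleftrightarrow> diff_op 1 ?g = (\<lambda>_. 0)"
    using kills_0_int_iff[of ?g] by (simp add: kills_0_iff)
  finally show ?case by (simp only: kills_Suc_iff funpow.simps(2) o_apply)
qed

text \<open>Discrete antiderivative on \<open>\<int>\<close>: one of the two sums is always empty.\<close>
definition int_antidiff :: "(int \<Rightarrow> 'b::ab_group_add) \<Rightarrow> int \<Rightarrow> 'b" where
  "int_antidiff \<psi> k = (\<Sum>j\<in>{0..<k}. \<psi> j) - (\<Sum>j\<in>{k..<0}. \<psi> j)"

lemma diff_op_int_antidiff: "diff_op 1 (int_antidiff \<psi>) = \<psi>"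
proof
  fix k :: int
  show "diff_op 1 (int_antidiff \<psi>) k = \<psi> k"
  proof (cases "0 \<le> k")
    case True
    then have "{0..<k + 1} = insert k {0..<k}" "{k + 1..<0} = {}" "{k..<0} = {}" by auto
    then show ?thesis by (simp add: diff_op_def int_antidiff_def)
  next
    case False
    then have "{k..<0} = insert k {k + 1..<0}" "{0..<k + 1} = {}" "{0..<k} = {}" by auto
    then show ?thesis by (simp add: diff_op_def int_antidiff_def)
  qed
qed

lemma funpow_diff_op_int_antidiff: "(diff_op 1 ^^ n) ((int_antidiff ^^ n) \<psi>) = \<psi>"
proof (induction n)
  case (Suc n)
  have "(diff_op 1 ^^ Suc n) ((int_antidiff ^^ Suc n) \<psi>)
      = (diff_op 1 ^^ n) (diff_op 1 (int_antidiff ((int_antidiff ^^ n) \<psi>)))"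
    by (simp only: funpow_Suc_right[where f = "diff_op 1"] funpow.simps(2)[where f = int_antidiff] o_apply)
  also have "\<dots> = \<psi>" by (simp only: diff_op_int_antidiff Suc.IH)
  finally show ?case .
qed simp

lemma funpow_diff_op_zero: "(diff_op a ^^ n) (\<lambda>_. 0::'b::ab_group_add) = (\<lambda>_. 0)"
  by (induction n) (simp_all add: diff_op_def)

lemma fdeg_int_antidiff_const:
  assumes "(b::'b::ab_group_add) \<noteq> 0"
  shows "fdeg ((int_antidiff ^^ n) (\<lambda>_::int. b)) = Fin n"
proof (rule fdeg_eq_FinI)
  let ?\<phi> = "(int_antidiff ^^ n) (\<lambda>_::int. b)"
  have top: "(diff_op 1 ^^ n) ?\<phi> = (\<lambda>_. b)" by (rule funpow_diff_op_int_antidiff)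
  have "(\<lambda>_::int. b) \<noteq> (\<lambda>_. 0)" using assms by (metis)
  then show "?\<phi> \<noteq> (\<lambda>_. 0)" using top funpow_diff_op_zero by metis
  show "kills n ?\<phi>" unfolding kills_int_iff using top by (simp add: diff_op_def)
  show "n \<le> m" if "kills m ?\<phi>" for m
  proof (rule ccontr)
    assume "\<not> n \<le> m"
    then have "kills (n - 1) ?\<phi>" using kills_mono[OF _ that] by simp
    then have "(diff_op 1 ^^ n) ?\<phi> = (\<lambda>_. 0)" using kills_int_iff \<open>\<not> n \<le> m\<close> by (metis Suc_diff_1 not_le not_less0 le_less_trans)
    then show False using top \<open>(\<lambda>_::int. b) \<noteq> (\<lambda>_. 0)\<close> by simp
  qed
qed

lemma funpow_diff_op_int_delta:
  "k \<le> - int n \<Longrightarrow>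
   (diff_op 1 ^^ n) (\<lambda>x. if x = 0 then b else 0) k = (if k = - int n then b else (0::'b::ab_group_add))"
proof (induction n arbitrary: k)
  case (Suc n)
  let ?G = "(diff_op 1 ^^ n) (\<lambda>x::int. if x = 0 then b else 0)"
  have "(diff_op 1 ^^ Suc n) (\<lambda>x. if x = 0 then b else 0) k = ?G (k + 1) - ?G k"
    by (simp add: diff_op_def)
  also have "\<dots> = (if k = - int (Suc n) then b else 0)"
    using Suc.IH[of "k + 1"] Suc.IH[of k] Suc.prems by auto
  finally show ?case .
qed simp

lemma fdeg_int_delta:
  assumes "(b::'b::ab_group_add) \<noteq> 0"
  shows "fdeg (\<lambda>x::int. if x = 0 then b else 0) = PosInf"
proof (rule fdeg_eq_PosInfI)
  show "(\<lambda>x::int. if x = 0 then b else 0) \<noteq> (\<lambda>_. 0)" using assms by (metis)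
  show "\<not> kills n (\<lambda>x::int. if x = 0 then b else 0)" for n
    unfolding kills_int_iff
    using funpow_diff_op_int_delta[of "- int (Suc n)" "Suc n" b] assms by (metis order_refl)
qed

lemma DD_surj_int:
  fixes A :: "'a::ab_group_add itself"
  assumes "(b::'b::ab_group_add) \<noteq> 0"
    and "\<And>x y. h (x + y) = h x + h y" and "surj (h :: 'a \<Rightarrow> int)"
  shows "DD A (UNIV :: 'b set) = UNIV"
proof -
  have "fdeg (\<lambda>x. \<phi> (h x)) \<in> DD A (UNIV :: 'b set)" for \<phi> :: "int \<Rightarrow> 'b"
    using DD_memI[of "\<lambda>x. \<phi> (h x)" UNIV A] by simp
  then have lifted: "fdeg \<phi> \<in> DD A (UNIV :: 'b set)" for \<phi> :: "int \<Rightarrow> 'b"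
    using fdeg_comp[of h, OF assms(2,3)] by metis
  have "d \<in> DD A (UNIV :: 'b set)" for d
  proof (cases d)
    case NegInf
    then show ?thesis using NegInf_in_DD[of UNIV A] by simp
  next
    case (Fin n)
    then show ?thesis using lifted fdeg_int_antidiff_const[OF assms(1), of n] by metis
  next
    case PosInf
    then show ?thesis using lifted fdeg_int_delta[OF assms(1)] by metis
  qed
  then show ?thesis by blast
qed

theorem proposition3p9:
  fixes A :: "'a::ab_group_add itself" and B :: "'b::ab_group_add itself"
  assumes ntA: "\<exists>a::'a. a \<noteq> 0" and ntB: "\<exists>b::'b. b \<noteq> 0"
  shows
   "(torsion_group A \<and> torsion_free B \<longrightarrow>
       DD A (UNIV :: 'b set) = {NegInf, Fin 0, PosInf})
  \<and> (torsion_group A \<and> torsion_split B \<and> (tors :: 'b set) \<noteq> {0} \<and> (tors :: 'b set) \<noteq> UNIV \<longrightarrow>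
       DD A (UNIV :: 'b set) = DD A (tors :: 'b set) \<union> {PosInf})
  \<and> ((\<exists>h :: 'a \<Rightarrow> int. (\<forall>x y. h (x + y) = h x + h y) \<and> surj h) \<longrightarrow>
       DD A (UNIV :: 'b set) = UNIV)"
proof -
  obtain a :: 'a and b :: 'b where "a \<noteq> 0" and "b \<noteq> 0" using ntA ntB by blast
  show ?thesis
  proof (intro conjI impI)
    show "DD A (UNIV :: 'b set) = {NegInf, Fin 0, PosInf}" if "torsion_group A \<and> torsion_free B"
      using DD_torsion_torsion_free[OF \<open>a \<noteq> 0\<close> \<open>b \<noteq> 0\<close>] that by blast
    show "DD A (UNIV :: 'b set) = DD A (tors :: 'b set) \<union> {PosInf}"
      if "torsion_group A \<and> torsion_split B \<and> (tors :: 'b set) \<noteq> {0} \<and> (tors :: 'b set) \<noteq> UNIV"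
      using DD_torsion_split[OF \<open>a \<noteq> 0\<close>] that by blast
    show "DD A (UNIV :: 'b set) = UNIV"
      if "\<exists>h :: 'a \<Rightarrow> int. (\<forall>x y. h (x + y) = h x + h y) \<and> surj h"
      using DD_surj_int[OF \<open>b \<noteq> 0\<close>] that by blast
  qed
qed

end
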